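(* Let $K\ge 1$ and, for $k=1,\dots,K$, let $a_k>0$, $b_k>0$, $P_{L,k}>0$, and let $\gamma_{\mathrm{out}}>0$. Let $Z_1,\dots,Z_K$ be independent, with $Z_k$ gamma distributed with shape $a_k$ and scale $b_k$ (the moment-matched gamma approximation described in the context), and for $\bar{\gamma}>0$ set $\gamma_k=\frac{\bar{\gamma}}{P_{L,k}}Z_k^2$, $\gamma^*=\max_k\gamma_k$, and $P_{out}(\bar{\gamma})=\Pr[\gamma^*\le\gamma_{\mathrm{out}}]$. Define $$P_{out}^{\infty}(\bar{\gamma})=\prod_{k=1}^{K}\left(\frac{b_k^2}{\gamma_{\mathrm{out}}\,(a_k!)^{-\frac{2}{a_k}}\,P_{L,k}}\,\bar{\gamma}\right)^{-\frac{a_k}{2}},$$ where $a_k!:=\Gamma(a_k+1)$. Then $P_{out}(\bar{\gamma})$ behaves as $P_{out}^{\infty}(\bar{\gamma})$ as $\bar{\gamma}\to\infty$, i.e. $P_{out}(\bar{\gamma})/P_{out}^{\infty}(\bar{\gamma})\to 1$.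
   Context: Model: there are $K$ reflecting surfaces; surface $k$ has $N_k$ elements with mutually independent amplitudes $\alpha_k^{(i)}$ (Nakagami-$m$, shape $m_{k,1}$, spread $\Omega_{k,1}$) and $\beta_k^{(i)}$ (Nakagami-$m$, shape $m_{k,2}$, spread $\Omega_{k,2}$), and $a_k=N_k\mu_k^2/\sigma_k^2$, $b_k=\sigma_k^2/\mu_k$, where $\mu_k,\sigma_k^2$ are the mean and variance of $\alpha_k^{(1)}\beta_k^{(1)}$; the distribution of $\sum_{i=1}^{N_k}\alpha_k^{(i)}\beta_k^{(i)}$ is approximated by the gamma law with shape $a_k$, scale $b_k$. $P_{L,k}$ is the path loss of path $k$, $\bar{\gamma}$ the average SNR, $\gamma_{\mathrm{out}}$ the outage threshold. *)

theory Defs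
  imports "HOL-Probability.Probability"
begin

definition gamma_density :: "real \<Rightarrow> real \<Rightarrow> real \<Rightarrow> real" where
  "gamma_density a b x =
     (if x > 0 then x powr (a - 1) * exp (- x / b) / (Gamma a * b powr a) else 0)"

definition Pout_inf ::
  "nat \<Rightarrow> (nat \<Rightarrow> real) \<Rightarrow> (nat \<Rightarrow> real) \<Rightarrow> (nat \<Rightarrow> real) \<Rightarrow> real \<Rightarrow> real \<Rightarrow> real" where
  "Pout_inf K a b PL gout g =
     (\<Prod>k\<in>{1..K}. (b k ^ 2 / (gout * (Gamma (a k + 1)) powr (- 2 / a k) * PL k) * g)
        powr (- a k / 2))"

definition Pout ::
  "'w measure \<Rightarrow> nat \<Rightarrow> (nat \<Rightarrow> 'w \<Rightarrow> real) \<Rightarrow> (nat \<Rightarrow> real) \<Rightarrow> real \<Rightarrow> real \<Rightarrow> real" where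
  "Pout M K Z PL gout g =
     measure M {\<omega> \<in> space M. Max ((\<lambda>k. g / PL k * (Z k \<omega>)\<^sup>2) ` {1..K}) \<le> gout}"

end

theory Submission
  imports Defs
begin

text \<open>
  For a gamma variable Z of shape a and scale b, the density near 0 is x^(a-1)/(Gamma a b^a)
  up to the factor exp(-x/b), which lies in [exp(-t/b), 1] on [0, t]. Hence
  Pr[|Z| \<le> t] is squeezed between exp(-t/b) t^a/(Gamma(a+1) b^a) and t^a/(Gamma(a+1) b^a),
  so Pr[|Z| \<le> t] ~ t^a/(Gamma(a+1) b^a) as t \<rightarrow> 0+.
  The outage event is the intersection of the independent events |Z_k| \<le> sqrt(gout PL_k / g),
  whose radii tend to 0 as g \<rightarrow> \<infinity>, and the k-th factor of Pout_inf is exactly the leading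
  term above evaluated at that radius.
\<close>

definition gamma_cdf_leading :: "real \<Rightarrow> real \<Rightarrow> real \<Rightarrow> real" where
  "gamma_cdf_leading a b t = t powr a / (Gamma (a + 1) * b powr a)"

lemma gamma_cdf_leading_pos:
  assumes "a > 0" "b > 0" "t > 0"
  shows "gamma_cdf_leading a b t > 0"
  using assms by (simp add: gamma_cdf_leading_def Gamma_real_pos)

lemma nn_integral_powr_indicator:
  fixes a t c :: real
  assumes "a > 0" "t > 0" "c \<ge> 0"
  shows "(\<integral>\<^sup>+x. ennreal (c * (x powr (a - 1) * indicator {0..t} x)) \<partial>lborel)
         = ennreal (c * (t powr a / a))"
proof -
  have "((\<lambda>x. x powr (a - 1)) has_integral (t powr (a - 1 + 1) / (a - 1 + 1))) {0..t}"
    by (rule has_integral_powr_from_0) (use assms in auto)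
  hence "((\<lambda>x. c * x powr (a - 1)) has_integral (c * (t powr a / a))) {0..t}"
    by (intro has_integral_mult_right) simp
  hence "((\<lambda>x. if x \<in> {0..t} then c * x powr (a - 1) else 0) has_integral (c * (t powr a / a))) UNIV"
    by (subst has_integral_restrict_UNIV)
  hence "((\<lambda>x. c * (x powr (a - 1) * indicator {0..t} x)) has_integral (c * (t powr a / a))) UNIV"
    by (rule has_integral_eq[rotated]) (auto simp: indicator_def)
  then show ?thesis
    by (rule nn_integral_has_integral_lborel[rotated 2]) (use assms in auto)
qed

lemma gamma_prob_interval_bounds:
  assumes "prob_space M"
    and D: "distributed M lborel X (\<lambda>x. ennreal (gamma_density a b x))"
    and a: "a > 0" and b: "b > 0" and t: "t > 0"
  shows "exp (- t / b) * gamma_cdf_leading a b t \<le> measure M (X -` {-t..t} \<inter> space M)"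
    and "measure M (X -` {-t..t} \<inter> space M) \<le> gamma_cdf_leading a b t"
proof -
  interpret prob_space M by fact
  define C where "C = 1 / (Gamma a * b powr a)"
  have C: "C > 0" using a b by (simp add: C_def Gamma_real_pos)
  have "Gamma (a + 1) = a * Gamma a"
    using a by (intro Gamma_plus1) (auto elim!: nonpos_Ints_cases)
  then have leading: "gamma_cdf_leading a b t = C * (t powr a / a)"
    by (simp add: gamma_cdf_leading_def C_def mult_ac)
  have prob: "ennreal (measure M (X -` {-t..t} \<inter> space M)) =
      (\<integral>\<^sup>+x. ennreal (gamma_density a b x) * indicator {-t..t} x \<partial>lborel)"
    using distributed_emeasure[OF D, of "{-t..t}"] by (simp add: emeasure_eq_measure)
  have upper: "ennreal (gamma_density a b x) * indicator {-t..t} x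
      \<le> ennreal (C * (x powr (a - 1) * indicator {0..t} x))" for x
  proof (cases "x > 0")
    case True
    have "x powr (a - 1) * exp (- x / b) \<le> x powr (a - 1)"
      using True b by (simp add: mult_left_le)
    hence "gamma_density a b x \<le> C * x powr (a - 1)"
      using True C by (simp add: gamma_density_def C_def divide_right_mono)
    then show ?thesis
      using True by (auto simp: indicator_def intro: ennreal_leI)
  qed (auto simp: gamma_density_def indicator_def)
  have lower: "ennreal (exp (- t / b) * C * (x powr (a - 1) * indicator {0..t} x))
      \<le> ennreal (gamma_density a b x) * indicator {-t..t} x" for x
  proof (cases "x > 0 \<and> x \<le> t")
    case True
    have "x powr (a - 1) * exp (- t / b) \<le> x powr (a - 1) * exp (- x / b)"
      using True b by (simp add: mult_left_mono divide_right_mono)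
    hence "exp (- t / b) * C * x powr (a - 1) \<le> gamma_density a b x"
      using True C
      by (simp add: gamma_density_def C_def divide_right_mono mult.commute mult.left_commute)
    then show ?thesis
      using True by (auto simp: indicator_def intro: ennreal_leI)
  next
    case False
    then show ?thesis
      using t by (cases "x > 0") (auto simp: indicator_def)
  qed
  have "ennreal (measure M (X -` {-t..t} \<inter> space M))
      \<le> (\<integral>\<^sup>+x. ennreal (C * (x powr (a - 1) * indicator {0..t} x)) \<partial>lborel)"
    unfolding prob by (intro nn_integral_mono upper)
  also have "\<dots> = ennreal (C * (t powr a / a))"
    by (rule nn_integral_powr_indicator) (use a t C in auto)
  finally show "measure M (X -` {-t..t} \<inter> space M) \<le> gamma_cdf_leading a b t"
    unfolding leading using C a t by (subst (asm) ennreal_le_iff) auto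
  have "ennreal (exp (- t / b) * C * (t powr a / a))
      = (\<integral>\<^sup>+x. ennreal (exp (- t / b) * C * (x powr (a - 1) * indicator {0..t} x)) \<partial>lborel)"
    by (rule nn_integral_powr_indicator[symmetric]) (use a t C in auto)
  also have "\<dots> \<le> ennreal (measure M (X -` {-t..t} \<inter> space M))"
    unfolding prob by (intro nn_integral_mono lower)
  finally show "exp (- t / b) * gamma_cdf_leading a b t \<le> measure M (X -` {-t..t} \<inter> space M)"
    unfolding leading by (subst (asm) ennreal_le_iff) (auto simp: mult_ac)
qed

lemma gamma_prob_interval_asymp:
  assumes "prob_space M"
    and "distributed M lborel X (\<lambda>x. ennreal (gamma_density a b x))"
    and "a > 0" "b > 0"
  shows "((\<lambda>t. measure M (X -` {-t..t} \<inter> space M) / gamma_cdf_leading a b t) \<longlongrightarrow> 1)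
           (at_right 0)"
proof (rule tendsto_sandwich[of "\<lambda>t. exp (- t / b)" _ _ "\<lambda>_. 1"])
  have pos: "\<forall>\<^sub>F t in at_right 0. t > (0::real)"
    by (simp add: eventually_at_filter)
  then show "\<forall>\<^sub>F t in at_right 0.
      exp (- t / b) \<le> measure M (X -` {-t..t} \<inter> space M) / gamma_cdf_leading a b t"
    by eventually_elim
      (use assms gamma_prob_interval_bounds(1) gamma_cdf_leading_pos in \<open>simp add: pos_le_divide_eq\<close>)
  from pos show "\<forall>\<^sub>F t in at_right 0.
      measure M (X -` {-t..t} \<inter> space M) / gamma_cdf_leading a b t \<le> 1"
    by eventually_elim
      (use assms gamma_prob_interval_bounds(2) gamma_cdf_leading_pos in \<open>simp add: pos_divide_le_eq\<close>)
  have "((\<lambda>t. exp (- t / b)) \<longlongrightarrow> exp (- 0 / b)) (at_right 0)"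
    by (intro tendsto_intros) (use \<open>b > 0\<close> in auto)
  then show "((\<lambda>t. exp (- t / b)) \<longlongrightarrow> 1) (at_right 0)"
    by simp
qed simp

lemma Pout_eq_prod_prob_interval:
  assumes "prob_space M" "K \<ge> 1"
    and "\<And>k. k \<in> {1..K} \<Longrightarrow> PL k > 0" and "g > 0"
    and indep: "prob_space.indep_vars M (\<lambda>_. borel) Z {1..K}"
  shows "Pout M K Z PL gout g =
           (\<Prod>k\<in>{1..K}. measure M (Z k -` {- sqrt (gout * PL k / g)..sqrt (gout * PL k / g)}
                                     \<inter> space M))"
proof -
  interpret prob_space M by fact
  have outage_iff: "g * z\<^sup>2 / PL k \<le> gout \<longleftrightarrow>
      - sqrt (gout * PL k / g) \<le> z \<and> z \<le> sqrt (gout * PL k / g)"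
    if "k \<in> {1..K}" for k z
  proof -
    have "g * z\<^sup>2 / PL k \<le> gout \<longleftrightarrow> z\<^sup>2 \<le> gout * PL k / g"
      using that assms(3,4) by (simp add: field_simps)
    also have "\<dots> \<longleftrightarrow> sqrt (z\<^sup>2) \<le> sqrt (gout * PL k / g)"
      by (rule real_sqrt_le_iff[symmetric])
    finally show ?thesis by (auto simp: abs_le_iff)
  qed
  have outage_event: "{\<omega> \<in> space M. Max ((\<lambda>k. g / PL k * (Z k \<omega>)\<^sup>2) ` {1..K}) \<le> gout}
      = (\<Inter>k\<in>{1..K}. Z k -` {- sqrt (gout * PL k / g)..sqrt (gout * PL k / g)} \<inter> space M)"
    using \<open>K \<ge> 1\<close> by (auto simp: Max_le_iff outage_iff)
  show ?thesis
    unfolding Pout_def outage_event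
    by (rule indep_varsD_finite[OF indep]) (use \<open>K \<ge> 1\<close> in auto)
qed

lemma Pout_inf_factor_eq:
  fixes a b PL gout g G :: real
  assumes "a > 0" "b > 0" "PL > 0" "gout > 0" "g > 0" "G > 0"
  shows "(b ^ 2 / (gout * G powr (- 2 / a) * PL) * g) powr (- a / 2)
         = sqrt (gout * PL / g) powr a / (G * b powr a)"
proof -
  define x where "x = gout * PL / g"
  have x: "x > 0" using assms by (simp add: x_def)
  have "G powr (- 2 / a) = inverse (G powr (2 / a))" by (simp add: powr_minus[symmetric])
  then have "b ^ 2 / (gout * G powr (- 2 / a) * PL) * g = (b powr 2 * G powr (2 / a)) / x"
    using assms by (simp add: x_def field_simps)
  also have "\<dots> powr (- a / 2) = x powr (a / 2) / (b powr 2 * G powr (2 / a)) powr (a / 2)"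
    using assms x by (simp add: powr_divide powr_minus_divide)
  also have "(b powr 2 * G powr (2 / a)) powr (a / 2) = G * b powr a"
    using assms by (simp add: powr_mult powr_powr flip: powr_numeral)
  also have "x powr (a / 2) = sqrt x powr a"
    using x by (simp add: powr_powr flip: powr_half_sqrt)
  finally show ?thesis by (simp add: x_def)
qed

lemma Pout_inf_eq_prod_gamma_cdf_leading:
  assumes "\<And>k. k \<in> {1..K} \<Longrightarrow> a k > 0" "\<And>k. k \<in> {1..K} \<Longrightarrow> b k > 0"
    and "\<And>k. k \<in> {1..K} \<Longrightarrow> PL k > 0" "gout > 0" "g > 0"
  shows "Pout_inf K a b PL gout g =
           (\<Prod>k\<in>{1..K}. gamma_cdf_leading (a k) (b k) (sqrt (gout * PL k / g)))"
  unfolding Pout_inf_def gamma_cdf_leading_def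
  by (intro prod.cong refl Pout_inf_factor_eq)
    (use assms in \<open>auto intro!: Gamma_real_pos simp: add_pos_pos\<close>)

lemma filterlim_sqrt_const_div_at_top:
  fixes c :: real
  assumes "c > 0"
  shows "filterlim (\<lambda>g. sqrt (c / g)) (at_right 0) at_top"
proof (rule tendsto_imp_filterlim_at_right)
  have "((\<lambda>g. c / g) \<longlongrightarrow> 0) at_top"
    by (intro tendsto_divide_0[OF tendsto_const] filterlim_at_top_imp_at_infinity filterlim_ident)
  then show "((\<lambda>g. sqrt (c / g)) \<longlongrightarrow> 0) at_top"
    using tendsto_real_sqrt by fastforce
  show "\<forall>\<^sub>F g in at_top. sqrt (c / g) > 0"
    using eventually_gt_at_top[of 0] by eventually_elim (use assms in simp)
qed

theorem corollary1:
  fixes M :: "'w measure" and K :: nat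
    and a b PL :: "nat \<Rightarrow> real" and gout :: real and Z :: "nat \<Rightarrow> 'w \<Rightarrow> real"
  assumes "prob_space M"
    and "K \<ge> 1"
    and "\<And>k. k \<in> {1..K} \<Longrightarrow> a k > 0"
    and "\<And>k. k \<in> {1..K} \<Longrightarrow> b k > 0"
    and "\<And>k. k \<in> {1..K} \<Longrightarrow> PL k > 0"
    and "gout > 0"
    and "prob_space.indep_vars M (\<lambda>_. borel) Z {1..K}"
    and "\<And>k. k \<in> {1..K} \<Longrightarrow>
           distributed M lborel (Z k) (\<lambda>x. ennreal (gamma_density (a k) (b k) x))"
  shows "((\<lambda>g. Pout M K Z PL gout g / Pout_inf K a b PL gout g) \<longlongrightarrow> 1) at_top"
proof -
  define r where "r k g = sqrt (gout * PL k / g)" for k g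
  define ratio where "ratio k t = measure M (Z k -` {-t..t} \<inter> space M)
                                   / gamma_cdf_leading (a k) (b k) t" for k t
  have "((\<lambda>g. ratio k (r k g)) \<longlongrightarrow> 1) at_top" if k: "k \<in> {1..K}" for k
  proof (rule filterlim_compose[of "ratio k"])
    show "(ratio k \<longlongrightarrow> 1) (at_right 0)"
      unfolding ratio_def using assms k by (intro gamma_prob_interval_asymp) auto
    show "filterlim (r k) (at_right 0) at_top"
      unfolding r_def using assms k by (intro filterlim_sqrt_const_div_at_top) simp
  qed
  then have "((\<lambda>g. \<Prod>k\<in>{1..K}. ratio k (r k g)) \<longlongrightarrow> (\<Prod>k\<in>{1..K}. 1)) at_top"
    by (intro tendsto_prod)
  moreover have "\<forall>\<^sub>F g in at_top.
      (\<Prod>k\<in>{1..K}. ratio k (r k g)) = Pout M K Z PL gout g / Pout_inf K a b PL gout g"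
    using eventually_gt_at_top[of 0]
  proof eventually_elim
    case (elim g)
    show ?case
      using Pout_eq_prod_prob_interval[OF assms(1,2,5) elim assms(7)]
        Pout_inf_eq_prod_gamma_cdf_leading[OF assms(3-6) elim]
      by (simp add: ratio_def r_def prod_dividef)
  qed
  ultimately show ?thesis
    by (simp add: tendsto_cong)
qed

end
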